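(* Let $n\ge1$ and let $\pi$ be uniformly distributed on $\mathcal S_n$. Then there exists a random permutation $\sigma\in\mathcal S_n$, which is a (bijective) deterministic function of $\pi$ and hence uniformly distributed on $\mathcal S_n$, such that with the one-cycle permutation $\sigma^*:=(\pi(1),\pi(2),\dots,\pi(n))_{\rm c}\in\mathcal S_n^*$, \[ \mathbb{E}\,\#\{i\in\{1,\dots,n\}:\sigma(i)\ne\sigma^*(i)\}\le\sum_{j=1}^n j^{-1}\le1+\log(n). \]
   Context: $\mathcal S_n$ denotes the set of permutations of $\{1,\dots,n\}$. For pairwise distinct $a_1,\dots,a_m\in\{1,\dots,n\}$, $(a_1,\dots,a_m)_{\rm c}$ denotes the cycle mapping $a_1\mapsto a_2\mapsto\cdots\mapsto a_m\mapsto a_1$ and fixing all other points. $\mathcal S_n^*$ is the set of permutations consisting of a single cycle of length $n$. *)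

theory Defs
  imports "HOL-Probability.Probability" "HOL-Combinatorics.Cycles"
begin

definition Sym :: "nat \<Rightarrow> (nat \<Rightarrow> nat) set" where
  "Sym n = {p. p permutes {1..n}}"

definition cyc_of :: "nat \<Rightarrow> (nat \<Rightarrow> nat) \<Rightarrow> (nat \<Rightarrow> nat)" where
  "cyc_of n p = cycle_of_list (map p [1..<n+1])"

end

theory Submission
  imports Defs
begin

text \<open>
  Cut the word \<open>\<pi>(1) \<dots> \<pi>(n)\<close> in front of every record (left-to-right maximum) and close each
  block \<open>\<pi>(a), \<dots>, \<pi>(b)\<close> into a cycle. The resulting \<open>\<sigma>\<close> is Foata's fundamental bijection:
  \<open>\<pi>\<close> is recovered from \<open>\<sigma>\<close> by writing each cycle with its largest element first and listing the
  cycles in increasing order of these largest elements. Inside a block \<open>\<sigma>\<close> agrees with the long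
  cycle \<open>(\<pi>(1), \<dots>, \<pi>(n))\<close>, so the two differ at most at the last element of each block, i.e.
  at most once per record. Position \<open>k\<close> is a record of a uniform permutation with probability
  \<open>1/k\<close>, hence the expected number of disagreements is at most the harmonic number \<open>H\<^sub>n\<close>.
\<close>

definition is_record :: "(nat \<Rightarrow> nat) \<Rightarrow> nat \<Rightarrow> bool" where
  "is_record p k \<longleftrightarrow> (\<forall>i\<in>{1..<k}. p i < p k)"

definition last_record :: "(nat \<Rightarrow> nat) \<Rightarrow> nat \<Rightarrow> nat" where
  "last_record p k = Max {i\<in>{1..k}. is_record p i}"

definition block_end :: "nat \<Rightarrow> (nat \<Rightarrow> nat) \<Rightarrow> nat \<Rightarrow> bool" where
  "block_end n p k \<longleftrightarrow> k = n \<or> is_record p (Suc k)"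

text \<open>
  A block \<open>[a, b]\<close> of positions is cycled as \<open>a \<mapsto> a + 1 \<mapsto> \<dots> \<mapsto> b \<mapsto> a\<close>, where \<open>a\<close> is the
  last record up to \<open>b\<close>; conjugating by \<open>p\<close> turns this into the cycle \<open>(p a, \<dots>, p b)\<close>.
\<close>

definition block_shift :: "nat \<Rightarrow> (nat \<Rightarrow> nat) \<Rightarrow> nat \<Rightarrow> nat" where
  "block_shift n p k =
     (if k \<in> {1..n} then if block_end n p k then last_record p k else Suc k else k)"

definition foata :: "nat \<Rightarrow> (nat \<Rightarrow> nat) \<Rightarrow> nat \<Rightarrow> nat" where
  "foata n p = p \<circ> block_shift n p \<circ> inv p"

subsection \<open>Records\<close>

lemma is_record_1 [simp]: "is_record p 1" "is_record p (Suc 0)"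
  by (simp_all add: is_record_def)

lemma
  assumes "1 \<le> k"
  shows last_record_in: "last_record p k \<in> {1..k}"
    and is_record_last_record: "is_record p (last_record p k)"
    and not_is_record_after_last_record:
      "last_record p k < i \<Longrightarrow> i \<le> k \<Longrightarrow> \<not> is_record p i"
proof -
  let ?R = "{i\<in>{1..k}. is_record p i}"
  have "1 \<in> ?R" using assms by simp
  then have "last_record p k \<in> ?R"
    unfolding last_record_def by (intro Max_in) auto
  then show "last_record p k \<in> {1..k}" "is_record p (last_record p k)" by auto
  show "\<not> is_record p i" if "last_record p k < i" "i \<le> k"
  proof
    assume "is_record p i"
    then have "i \<le> last_record p k"
      using that assms unfolding last_record_def by (intro Max_ge) auto
    then show False using that by simp
  qed
qed

lemma last_record_eqI:
  assumes "1 \<le> a" "a \<le> k" "is_record p a" "\<And>i. a < i \<Longrightarrow> i \<le> k \<Longrightarrow> \<not> is_record p i"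
  shows "last_record p k = a"
proof -
  have k: "1 \<le> k" using assms by simp
  have "\<not> last_record p k < a"
    using not_is_record_after_last_record[OF k] assms by blast
  moreover have "\<not> a < last_record p k"
    using assms(4) last_record_in[OF k] is_record_last_record[OF k] by auto
  ultimately show ?thesis by simp
qed

lemma last_record_self: "1 \<le> k \<Longrightarrow> is_record p k \<Longrightarrow> last_record p k = k"
  by (rule last_record_eqI) auto

lemma last_record_Suc:
  assumes "1 \<le> k" "\<not> is_record p (Suc k)"
  shows "last_record p (Suc k) = last_record p k"
proof (rule last_record_eqI)
  show "1 \<le> last_record p k" "last_record p k \<le> Suc k" "is_record p (last_record p k)"
    using last_record_in[OF assms(1), of p] is_record_last_record[OF assms(1), of p] by auto
  show "\<not> is_record p i" if "last_record p k < i" "i \<le> Suc k" for i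
    using that assms not_is_record_after_last_record[OF assms(1)] by (cases "i = Suc k") auto
qed

lemma le_last_record: "1 \<le> i \<Longrightarrow> i \<le> k \<Longrightarrow> p i \<le> p (last_record p k)"
proof (induction k arbitrary: i)
  case (Suc k)
  show ?case
  proof (cases "is_record p (Suc k)")
    case True
    then have "last_record p (Suc k) = Suc k" by (simp add: last_record_self)
    then show ?thesis
      using True Suc.prems by (cases "i = Suc k") (auto simp: is_record_def intro!: less_imp_le)
  next
    case False
    then have k: "1 \<le> k" by (cases k) auto
    have "p (Suc k) \<le> p (last_record p k)"
    proof -
      obtain i' where "i' \<in> {1..<Suc k}" "p (Suc k) \<le> p i'"
        using False by (auto simp: is_record_def not_less)
      then show ?thesis using Suc.IH[of i'] by auto
    qed
    then show ?thesis
      using Suc False k by (auto simp: last_record_Suc le_Suc_eq)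
  qed
qed simp

subsection \<open>The block shift\<close>

lemma block_shift_in: "k \<in> {1..n} \<Longrightarrow> block_shift n p k \<in> {1..n}"
  using last_record_in[of k p] by (auto simp: block_shift_def block_end_def)

lemma is_record_block_shift_iff:
  "k \<in> {1..n} \<Longrightarrow> is_record p (block_shift n p k) \<longleftrightarrow> block_end n p k"
  using is_record_last_record[of k p] by (auto simp: block_shift_def block_end_def)

lemma last_record_less_after_block_end:
  assumes "1 \<le> k" "k < k'" "k' \<le> n" "block_end n p k"
  shows "last_record p k < last_record p k'"
proof -
  have "is_record p (Suc k)" using assms by (simp add: block_end_def)
  then have "Suc k \<le> last_record p k'"
    using not_is_record_after_last_record[of k' p "Suc k"] assms by force
  then show ?thesis using last_record_in[OF assms(1), of p] by simp
qed

lemma inj_on_block_shift: "inj_on (block_shift n p) {1..n}"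
proof (rule linorder_inj_onI')
  fix k k' assume k: "k \<in> {1..n}" and k': "k' \<in> {1..n}" and "k < k'"
  show "block_shift n p k \<noteq> block_shift n p k'"
  proof (cases "block_end n p k \<longleftrightarrow> block_end n p k'")
    case True
    then show ?thesis
      using k k' \<open>k < k'\<close> last_record_less_after_block_end[of k k' n p]
      by (auto simp: block_shift_def)
  next
    case False
    then show ?thesis
      using is_record_block_shift_iff[OF k, of p] is_record_block_shift_iff[OF k', of p] by auto
  qed
qed

lemma block_shift_permutes: "block_shift n p permutes {1..n}"
proof (rule bij_imp_permutes)
  have "block_shift n p ` {1..n} = {1..n}"
    by (rule endo_inj_surj) (use block_shift_in inj_on_block_shift in auto)
  then show "bij_betw (block_shift n p) {1..n} {1..n}"
    using inj_on_block_shift by (simp add: bij_betw_def)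
  show "block_shift n p k = k" if "k \<notin> {1..n}" for k
    using that unfolding block_shift_def by presburger
qed

lemma funpow_block_shift_reaches_last_record:
  assumes "m \<in> {1..n}"
  shows "\<exists>j. (block_shift n p ^^ j) m = last_record p m"
  using assms
proof (induction "n - m" arbitrary: m)
  case 0
  then have "(block_shift n p ^^ 1) m = last_record p m"
    by (simp add: block_shift_def block_end_def)
  then show ?case by blast
next
  case (Suc d)
  show ?case
  proof (cases "block_end n p m")
    case True
    then have "(block_shift n p ^^ 1) m = last_record p m"
      using Suc.prems by (simp add: block_shift_def)
    then show ?thesis by blast
  next
    case False
    then have m: "block_shift n p m = Suc m" "m < n" "\<not> is_record p (Suc m)"
      using Suc.prems by (auto simp: block_shift_def block_end_def)
    obtain j where "(block_shift n p ^^ j) (Suc m) = last_record p (Suc m)"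
      using Suc.hyps(1)[of "Suc m"] Suc.hyps(2) Suc.prems m(2) by force
    then have "(block_shift n p ^^ Suc j) m = last_record p (Suc m)"
      by (simp only: funpow_Suc_right o_apply m(1))
    then have "(block_shift n p ^^ Suc j) m = last_record p m"
      using last_record_Suc[of m p] Suc.prems m by simp
    then show ?thesis by blast
  qed
qed

lemma funpow_block_shift_stays_in_block:
  assumes "a \<in> {1..n}" "is_record p a"
  shows "(block_shift n p ^^ j) a \<in> {a..n} \<and> last_record p ((block_shift n p ^^ j) a) = a"
proof (induction j)
  case 0
  then show ?case using assms by (simp add: last_record_self)
next
  case (Suc j)
  define i where "i = (block_shift n p ^^ j) a"
  have i: "i \<in> {a..n}" "last_record p i = a"
    using Suc.IH by (simp_all add: i_def)
  have "1 \<le> i" using i assms by simp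
  have "block_shift n p i \<in> {a..n} \<and> last_record p (block_shift n p i) = a"
  proof (cases "block_end n p i")
    case True
    then show ?thesis
      using i assms \<open>1 \<le> i\<close> by (simp add: block_shift_def last_record_self)
  next
    case False
    then show ?thesis
      using i \<open>1 \<le> i\<close> by (auto simp: block_shift_def block_end_def last_record_Suc)
  qed
  then show ?case by (simp add: i_def)
qed

lemma funpow_block_shift_le_record:
  assumes "a \<in> {1..n}" "is_record p a"
  shows "p ((block_shift n p ^^ j) a) \<le> p a"
  using funpow_block_shift_stays_in_block[OF assms, of j]
    le_last_record[of "(block_shift n p ^^ j) a" "(block_shift n p ^^ j) a" p] assms
  by auto

subsection \<open>The Foata bijection\<close>

lemma finite_Sym: "finite (Sym n)"
  unfolding Sym_def by (rule finite_permutations) simp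

lemma Sym_nonempty: "Sym n \<noteq> {}"
  unfolding Sym_def using permutes_id[of "{1..n}"] by blast

lemma inj_of_Sym: "p \<in> Sym n \<Longrightarrow> inj p"
  unfolding Sym_def using permutes_inj by blast

lemma foata_in_Sym:
  assumes "p \<in> Sym n"
  shows "foata n p \<in> Sym n"
proof -
  have "p permutes {1..n}" using assms by (simp add: Sym_def)
  then have "p \<circ> block_shift n p \<circ> inv p permutes {1..n}"
    by (intro permutes_compose permutes_inv block_shift_permutes)
  then show ?thesis by (simp add: Sym_def foata_def)
qed

lemma foata_apply: "p \<in> Sym n \<Longrightarrow> foata n p (p k) = p (block_shift n p k)"
  unfolding Sym_def foata_def using permutes_inverses(2) by fastforce

lemma funpow_foata: "p \<in> Sym n \<Longrightarrow> (foata n p ^^ j) (p k) = p ((block_shift n p ^^ j) k)"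
  by (induction j) (auto simp: foata_apply)

text \<open>
  If \<open>Suc k\<close> is no record of \<open>p\<close> then \<open>foata n p\<close> maps \<open>p k\<close> to \<open>p (Suc k)\<close>, a value outside \<open>p ` {1..k}\<close>,
  whereas a block end \<open>k\<close> of \<open>q\<close> would send it back into \<open>q ` {1..k}\<close>.
\<close>

lemma foata_eq_agree_at_non_record:
  assumes p: "p \<in> Sym n" and q: "q \<in> Sym n" and eq: "foata n p = foata n q"
    and agree: "\<forall>i\<in>{1..k}. p i = q i" and k: "Suc k \<le> n" and nr: "\<not> is_record p (Suc k)"
  shows "p (Suc k) = q (Suc k)"
proof -
  have k1: "1 \<le> k" using nr by (cases k) auto
  have "block_shift n p k = Suc k"
    using nr k k1 by (auto simp: block_shift_def block_end_def)
  moreover have "p k = q k" using agree k1 by simp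
  ultimately have pq: "p (Suc k) = q (block_shift n q k)"
    using foata_apply[OF p, of k] foata_apply[OF q, of k] eq by metis
  show ?thesis
  proof (cases "block_end n q k")
    case False
    then show ?thesis using pq k k1 by (simp add: block_shift_def)
  next
    case True
    have r: "last_record q k \<in> {1..k}" using last_record_in[OF k1] .
    then have "p (Suc k) = p (last_record q k)"
      using pq True k k1 agree by (simp add: block_shift_def)
    then have "Suc k = last_record q k" using inj_of_Sym[OF p] by (rule injD[rotated])
    then show ?thesis using r by simp
  qed
qed

text \<open>
  If \<open>Suc k\<close> is a record of both and \<open>v = p (Suc k) < q (Suc k)\<close>, then \<open>v\<close> is the largest
  element of its \<open>foata n p\<close>-cycle, but in \<open>q\<close> it sits in a later block, whose first value
  \<open>q s \<ge> q (Suc k) > v\<close> lies on the same cycle.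
\<close>

lemma foata_eq_record_not_less:
  assumes p: "p \<in> Sym n" and q: "q \<in> Sym n" and eq: "foata n p = foata n q"
    and agree: "\<forall>i\<in>{1..k}. p i = q i" and k: "Suc k \<le> n"
    and rp: "is_record p (Suc k)" and rq: "is_record q (Suc k)"
  shows "\<not> p (Suc k) < q (Suc k)"
proof
  assume less: "p (Suc k) < q (Suc k)"
  have pp: "p permutes {1..n}" and qp: "q permutes {1..n}" using p q by (auto simp: Sym_def)
  define v where "v = p (Suc k)"
  define m where "m = inv q v"
  have qm: "q m = v" using permutes_inverses(1)[OF qp] by (simp add: m_def)
  have m: "m \<in> {1..n}"
    using k permutes_in_image[OF pp] permutes_in_image[OF permutes_inv[OF qp]]
    by (simp add: m_def v_def)
  have "Suc k < m"
  proof (rule ccontr)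
    assume "\<not> Suc k < m"
    moreover have "m \<noteq> Suc k" using qm less by (auto simp: v_def)
    ultimately have "p m = p (Suc k)" "m \<noteq> Suc k" using agree qm m by (auto simp: v_def)
    then show False using inj_of_Sym[OF p] by (auto dest: injD)
  qed
  define s where "s = last_record q m"
  have s: "Suc k \<le> s" "is_record q s"
    using m \<open>Suc k < m\<close> rq not_is_record_after_last_record[of m q "Suc k"]
      is_record_last_record[of m q] by (force simp: s_def)+
  then have "q (Suc k) \<le> q s"
    by (cases "s = Suc k") (auto simp: is_record_def intro!: less_imp_le)
  obtain j where "(block_shift n q ^^ j) m = s"
    using funpow_block_shift_reaches_last_record[OF m] by (auto simp: s_def)
  then have "(foata n p ^^ j) v = q s" using funpow_foata[OF q, of j m] eq qm by simp
  moreover have "(foata n p ^^ j) v \<le> v"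
    using funpow_foata[OF p, of j "Suc k"] funpow_block_shift_le_record[of "Suc k" n p j] k rp
    by (simp add: v_def)
  ultimately show False using less \<open>q (Suc k) \<le> q s\<close> by (simp add: v_def)
qed

lemma foata_eq_agree_Suc:
  assumes p: "p \<in> Sym n" and q: "q \<in> Sym n" and eq: "foata n p = foata n q"
    and agree: "\<forall>i\<in>{1..k}. p i = q i" and k: "Suc k \<le> n"
  shows "p (Suc k) = q (Suc k)"
proof -
  have agree': "\<forall>i\<in>{1..k}. q i = p i" using agree by simp
  show ?thesis
  proof (cases "is_record p (Suc k) \<and> is_record q (Suc k)")
    case True
    then have "\<not> p (Suc k) < q (Suc k)" "\<not> q (Suc k) < p (Suc k)"
      using foata_eq_record_not_less[OF p q eq agree k]
        foata_eq_record_not_less[OF q p eq[symmetric] agree' k] by auto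
    then show ?thesis by simp
  next
    case False
    then show ?thesis
      using foata_eq_agree_at_non_record[OF p q eq agree k]
        foata_eq_agree_at_non_record[OF q p eq[symmetric] agree' k] by auto
  qed
qed

lemma inj_on_foata: "inj_on (foata n) (Sym n)"
proof (rule inj_onI)
  fix p q assume p: "p \<in> Sym n" and q: "q \<in> Sym n" and eq: "foata n p = foata n q"
  have "\<forall>i\<in>{1..k}. p i = q i" if "k \<le> n" for k
    using that
  proof (induction k)
    case (Suc k)
    then show ?case
      using foata_eq_agree_Suc[OF p q eq, of k] by (auto simp: le_Suc_eq)
  qed simp
  moreover have "p i = q i" if "i \<notin> {1..n}" for i
    using p q that by (auto simp: Sym_def permutes_not_in)
  ultimately show "p = q" by blast
qed

lemma bij_betw_foata: "bij_betw (foata n) (Sym n) (Sym n)"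
proof -
  have "foata n ` Sym n = Sym n"
    by (rule endo_inj_surj) (use finite_Sym foata_in_Sym inj_on_foata in auto)
  then show ?thesis using inj_on_foata by (simp add: bij_betw_def)
qed

subsection \<open>Comparison with the long cycle\<close>

lemma cyc_of_apply:
  assumes p: "p \<in> Sym n" and k: "k \<in> {1..n}"
  shows "cyc_of n p (p k) = p (if k < n then Suc k else 1)"
proof -
  define xs where "xs = map p [1..<n+1]"
  have d: "distinct xs"
    unfolding xs_def by (simp add: distinct_map inj_on_subset[OF inj_of_Sym[OF p]])
  have len: "length xs = n" by (simp add: xs_def)
  have nth_xs: "i < n \<Longrightarrow> xs ! i = p (Suc i)" for i by (simp add: xs_def del: upt_Suc)
  have "map (cycle_of_list xs) xs = rotate1 xs"
    using cyclic_rotation[OF d, of 1] by simp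
  then have "cycle_of_list xs (xs ! (k - 1)) = rotate1 xs ! (k - 1)"
    using k len by (metis Suc_le_eq atLeastAtMost_iff diff_less le_trans nth_map zero_less_one)
  also have "\<dots> = xs ! (k mod n)"
  proof -
    have "k - 1 < length xs" "Suc (k - 1) = k" using k len by auto
    then show ?thesis using nth_rotate1[of "k - 1" xs] len by simp
  qed
  also have "\<dots> = p (Suc (k mod n))" using k by (intro nth_xs) auto
  also have "\<dots> = p (if k < n then Suc k else 1)" using k by auto
  finally have "cycle_of_list xs (xs ! (k - 1)) = p (if k < n then Suc k else 1)" .
  moreover have "xs ! (k - 1) = p k" using nth_xs[of "k - 1"] k by auto
  ultimately show ?thesis unfolding cyc_of_def xs_def by simp
qed

lemma foata_eq_cyc_of_off_block_end:
  assumes "p \<in> Sym n" "k \<in> {1..n}" "\<not> block_end n p k"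
  shows "foata n p (p k) = cyc_of n p (p k)"
proof -
  have "block_shift n p k = Suc k" "k < n"
    using assms(2,3) by (auto simp: block_shift_def block_end_def)
  then show ?thesis using foata_apply[OF assms(1), of k] cyc_of_apply[OF assms(1,2)] by simp
qed

lemma card_block_ends_le_records:
  "card {k\<in>{1..n}. block_end n p k} \<le> card {k\<in>{1..n}. is_record p k}"
proof (rule card_inj_on_le[where f = "\<lambda>k. if k = n then 1 else Suc k"])
  show "inj_on (\<lambda>k. if k = n then 1 else Suc k) {k\<in>{1..n}. block_end n p k}"
  proof (rule inj_onI)
    fix a b assume "a \<in> {k\<in>{1..n}. block_end n p k}" "b \<in> {k\<in>{1..n}. block_end n p k}"
      and "(if a = n then 1 else Suc a) = (if b = n then 1 else Suc b)"
    then show "a = b" by (cases "a = n"; cases "b = n") auto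
  qed
  show "(\<lambda>k. if k = n then 1 else Suc k) ` {k\<in>{1..n}. block_end n p k}
      \<subseteq> {k\<in>{1..n}. is_record p k}"
    by (auto simp: block_end_def)
qed simp

lemma card_foata_neq_cyc_of_le_records:
  assumes p: "p \<in> Sym n"
  shows "card {i\<in>{1..n}. foata n p i \<noteq> cyc_of n p i} \<le> card {k\<in>{1..n}. is_record p k}"
proof -
  have pp: "p permutes {1..n}" using p by (simp add: Sym_def)
  have "{i\<in>{1..n}. foata n p i \<noteq> cyc_of n p i} \<subseteq> p ` {k\<in>{1..n}. block_end n p k}"
  proof
    fix i assume i: "i \<in> {i\<in>{1..n}. foata n p i \<noteq> cyc_of n p i}"
    define k where "k = inv p i"
    have "i = p k" "k \<in> {1..n}"
      using i permutes_inverses(1)[OF pp] permutes_in_image[OF permutes_inv[OF pp]]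
      by (auto simp: k_def)
    then show "i \<in> p ` {k\<in>{1..n}. block_end n p k}"
      using i foata_eq_cyc_of_off_block_end[OF p, of k] by auto
  qed
  then have "card {i\<in>{1..n}. foata n p i \<noteq> cyc_of n p i} \<le> card (p ` {k\<in>{1..n}. block_end n p k})"
    by (intro card_mono) auto
  also have "\<dots> \<le> card {k\<in>{1..n}. block_end n p k}" by (rule card_image_le) simp
  also have "\<dots> \<le> card {k\<in>{1..n}. is_record p k}" by (rule card_block_ends_le_records)
  finally show ?thesis .
qed

subsection \<open>Expected number of records\<close>

text \<open>
  Composing with the transposition of \<open>j\<close> and \<open>k\<close> injects the permutations with a record at \<open>k\<close>
  into those whose maximum on \<open>{1..k}\<close> sits at \<open>j\<close>; these \<open>k\<close> classes are disjoint.
\<close>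

lemma card_is_record_le:
  assumes k: "k \<in> {1..n}"
  shows "k * card {p\<in>Sym n. is_record p k} \<le> card (Sym n)"
proof -
  define A where "A j = {p\<in>Sym n. \<forall>i\<in>{1..k}. i \<noteq> j \<longrightarrow> p i < p j}" for j
  have Ak: "A k = {p\<in>Sym n. is_record p k}"
    unfolding A_def is_record_def by auto
  have "card (A k) \<le> card (A j)" if j: "j \<in> {1..k}" for j
  proof (rule card_inj_on_le[where f = "\<lambda>p. p \<circ> Transposition.transpose j k"])
    show "inj_on (\<lambda>p. p \<circ> Transposition.transpose j k) (A k)"
      by (rule inj_onI) (metis comp_id transpose_comp_involutory comp_assoc)
    have "Transposition.transpose j k permutes {1..n}"
      using j k by (intro permutes_swap_id) auto
    then show "(\<lambda>p. p \<circ> Transposition.transpose j k) ` A k \<subseteq> A j"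
      using j by (auto simp: A_def Sym_def Transposition.transpose_def intro: permutes_compose)
    show "finite (A j)" using finite_Sym by (simp add: A_def)
  qed
  then have "k * card (A k) \<le> (\<Sum>j\<in>{1..k}. card (A j))"
    using sum_mono[of "{1..k}" "\<lambda>_. card (A k)" "\<lambda>j. card (A j)"] by simp
  also have "\<dots> = card (\<Union>(A ` {1..k}))"
  proof (rule card_UN_disjoint[symmetric])
    show "\<forall>j\<in>{1..k}. finite (A j)" using finite_Sym by (simp add: A_def)
    show "\<forall>i\<in>{1..k}. \<forall>j\<in>{1..k}. i \<noteq> j \<longrightarrow> A i \<inter> A j = {}"
      unfolding A_def by fastforce
  qed simp
  also have "\<dots> \<le> card (Sym n)" by (rule card_mono[OF finite_Sym]) (auto simp: A_def)
  finally show ?thesis using Ak by simp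
qed

lemma expectation_card_records_le:
  "measure_pmf.expectation (pmf_of_set (Sym n)) (\<lambda>p. real (card {k\<in>{1..n}. is_record p k}))
     \<le> (\<Sum>k=1..n. 1 / real k)"
proof -
  define N where "N = real (card (Sym n))"
  have N: "N > 0" using Sym_nonempty finite_Sym by (simp add: N_def card_gt_0_iff)
  have "measure_pmf.expectation (pmf_of_set (Sym n)) (\<lambda>p. real (card {k\<in>{1..n}. is_record p k}))
      = (\<Sum>p\<in>Sym n. \<Sum>k\<in>{1..n}. of_bool (is_record p k)) / N"
    by (simp add: integral_pmf_of_set[OF Sym_nonempty finite_Sym] N_def sum_of_bool_eq Int_def)
  also have "\<dots> = (\<Sum>k\<in>{1..n}. real (card {p\<in>Sym n. is_record p k}) / N)"
    by (subst sum.swap) (simp add: sum_divide_distrib sum_of_bool_eq finite_Sym Int_def)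
  also have "\<dots> \<le> (\<Sum>k=1..n. 1 / real k)"
  proof (rule sum_mono)
    fix k assume k: "k \<in> {1..n}"
    have "real k * real (card {p\<in>Sym n. is_record p k}) \<le> N"
      using card_is_record_le[OF k] unfolding N_def by (metis of_nat_le_iff of_nat_mult)
    then show "real (card {p\<in>Sym n. is_record p k}) / N \<le> 1 / real k"
      using N k by (simp add: field_simps)
  qed
  finally show ?thesis .
qed

lemma harmonic_le_1_plus_ln:
  assumes "1 \<le> n"
  shows "(\<Sum>j=1..n. 1 / real j) \<le> 1 + ln (real n)"
proof -
  have "harm n - ln (real n) \<le> harm 1 - ln (real 1)"
    using euler_mascheroni_sequence_decreasing[of 1 n] assms by simp
  then show ?thesis by (simp add: harm_def inverse_eq_divide)
qed

theorem mainTheorem6: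
  fixes n :: nat
  assumes "n \<ge> 1"
  shows "\<exists>f :: (nat \<Rightarrow> nat) \<Rightarrow> (nat \<Rightarrow> nat).
           bij_betw f (Sym n) (Sym n) \<and>
           measure_pmf.expectation (pmf_of_set (Sym n))
             (\<lambda>p. real (card {i \<in> {1..n}. f p i \<noteq> cyc_of n p i}))
             \<le> (\<Sum>j=1..n. 1 / real j) \<and>
           (\<Sum>j=1..n. 1 / real j) \<le> 1 + ln (real n)"
proof (intro exI conjI)
  show "bij_betw (foata n) (Sym n) (Sym n)" by (rule bij_betw_foata)
  have "measure_pmf.expectation (pmf_of_set (Sym n))
          (\<lambda>p. real (card {i \<in> {1..n}. foata n p i \<noteq> cyc_of n p i}))
        \<le> measure_pmf.expectation (pmf_of_set (Sym n))
          (\<lambda>p. real (card {k\<in>{1..n}. is_record p k}))"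
    unfolding integral_pmf_of_set[OF Sym_nonempty finite_Sym]
    by (intro divide_right_mono sum_mono of_nat_mono card_foata_neq_cyc_of_le_records) simp_all
  also have "\<dots> \<le> (\<Sum>j=1..n. 1 / real j)" by (rule expectation_card_records_le)
  finally show "measure_pmf.expectation (pmf_of_set (Sym n))
          (\<lambda>p. real (card {i \<in> {1..n}. foata n p i \<noteq> cyc_of n p i}))
        \<le> (\<Sum>j=1..n. 1 / real j)" .
  show "(\<Sum>j=1..n. 1 / real j) \<le> 1 + ln (real n)" by (rule harmonic_le_1_plus_ln[OF assms])
qed

end
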